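(* Let $M\in\mathcal{I}_1$ be bounded, with $4\notin M$ and $\max M\ge5$. Then $\max M\ge7$.
   Context: For a summable sequence $\mathbf{x}=(x_n)$ of positive reals, $\mathcal{A}(\mathbf{x})=\{\sum_{n\in A}x_n: A\subseteq\mathbb{N}\}$ is its achievement set and its cardinal function $f$ assigns to $x\in\mathcal{A}(\mathbf{x})$ the cardinality (a positive integer, $\omega$, or $\mathfrak{c}$) of $\{(\varepsilon_n)\in\{0,1\}^{\mathbb{N}}:\sum\varepsilon_nx_n=x\}$. $\mathcal{I}_1$ is the family of ranges of cardinal functions of such sequences whose achievement set is a single closed interval. A set $M\subseteq\{1,2,\dots\}\cup\{\omega,\mathfrak{c}\}$ is bounded if there is $N\in\mathbb{N}$ with $M\subseteq\{1,\dots,N\}$. *)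

theory Defs
  imports "HOL-Analysis.Analysis"
begin

datatype cval = Fin nat | Omega | Cont

text \<open>A 0-1 sequence (epsilon_n) is identified with the set A = {n. epsilon_n = 1}.
  reps x t is the set of 0-1 sequences with sum of epsilon_n x_n equal to t.\<close>
definition reps :: "(nat \<Rightarrow> real) \<Rightarrow> real \<Rightarrow> nat set set" where
  "reps x t = {A. (\<lambda>n. if n \<in> A then x n else 0) sums t}"

definition achievement_set :: "(nat \<Rightarrow> real) \<Rightarrow> real set" where
  "achievement_set x = {t. reps x t \<noteq> {}}"

text \<open>Cardinality of the representation set; uncountable sets of representations
  have cardinality continuum (they are closed subsets of the Cantor space).\<close>
definition cardfun :: "(nat \<Rightarrow> real) \<Rightarrow> real \<Rightarrow> cval" where
  "cardfun x t = (if finite (reps x t) then Fin (card (reps x t))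
                  else if countable (reps x t) then Omega else Cont)"

definition I1 :: "cval set \<Rightarrow> bool" where
  "I1 M \<longleftrightarrow> (\<exists>x. (\<forall>n. x n > 0) \<and> summable x \<and>
      (\<exists>a b. achievement_set x = {a..b}) \<and> M = cardfun x ` achievement_set x)"

definition bounded_cset :: "cval set \<Rightarrow> bool" where
  "bounded_cset M \<longleftrightarrow> (\<exists>N. M \<subseteq> Fin ` {1..N})"

end

(*
  Reordering does not change the cardinal function, so x may be taken nonincreasing. As its
  achievement set is an interval, Kakeya's condition x n <= (sum of x k for k > n) holds, and the
  greedy algorithm represents every point of [0, tail p] by indices >= p. Each strict Kakeya
  inequality adds a representation on a whole interval, so when the number of representations is
  bounded, the tail is eventually geometric with ratio 1/2. A point s of [0, 2 x n0] then has two
  representations by indices >= n0 if it is a dyadic multiple of x n0 strictly inside the interval,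
  and one otherwise. Hence the number of representations of t is a sum of such bumps, shifted by
  the sums of the subsets of {..<n0}.

  At a generic point this sum counts the active bumps; just right of a break point it counts them
  plus the active bumps in any one class modulo the dyadic multiples. At the leftmost break point
  zs where three bumps are active, avoiding the value 4 and all values above 6 forces exactly three
  active bumps, all in the class of a bump starting at zs, and exactly one bump active just left
  of zs. But then the value at zs itself is 4.
*)

theory Submission
  imports Defs
begin

section \<open>Subsums of a positive summable sequence\<close>

locale pos_summable =
  fixes y :: "nat \<Rightarrow> real"
  assumes pos: "\<And>n. 0 < y n" and summable: "summable y"
begin

definition subsum :: "nat set \<Rightarrow> real" where
  "subsum B = infsum y B"

definition tail :: "nat \<Rightarrow> real" where
  "tail n = subsum {n..}"

lemma summable_on: "y summable_on B"
  using summable_nonneg_imp_summable_on[OF summable] pos less_imp_le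
  by (blast intro: summable_on_subset_banach)

lemma subsum_nonneg: "0 \<le> subsum B"
  unfolding subsum_def by (rule infsum_nonneg) (use pos less_imp_le in auto)

lemma subsum_mono: "B \<subseteq> C \<Longrightarrow> subsum B \<le> subsum C"
  unfolding subsum_def
  by (rule infsum_mono_neutral) (use summable_on pos in \<open>auto intro: less_imp_le\<close>)

lemma subsum_Un_disjoint: "B \<inter> C = {} \<Longrightarrow> subsum (B \<union> C) = subsum B + subsum C"
  unfolding subsum_def by (rule infsum_Un_disjoint) (use summable_on in auto)

lemma subsum_finite: "finite B \<Longrightarrow> subsum B = sum y B"
  unfolding subsum_def by simp

lemma subsum_empty [simp]: "subsum {} = 0"
  by (simp add: subsum_finite)

lemma subsum_insert: "n \<notin> B \<Longrightarrow> subsum (insert n B) = y n + subsum B"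
  using subsum_Un_disjoint[of "{n}" B] by (simp add: subsum_finite)

lemma subsum_pos: "B \<noteq> {} \<Longrightarrow> 0 < subsum B"
proof -
  assume "B \<noteq> {}"
  then obtain n where "n \<in> B" by blast
  then have "subsum B = y n + subsum (B - {n})"
    using subsum_insert[of n "B - {n}"] by (simp add: insert_absorb)
  then show ?thesis
    using pos[of n] subsum_nonneg[of "B - {n}"] by linarith
qed

lemma subsum_subset_eq_imp_eq: "B \<subseteq> C \<Longrightarrow> subsum B = subsum C \<Longrightarrow> B = C"
  using subsum_Un_disjoint[of B "C - B"] subsum_pos[of "C - B"]
  by (auto simp: Un_absorb1)

lemma sums_iff_subsum: "(\<lambda>n. if n \<in> B then y n else 0) sums t \<longleftrightarrow> subsum B = t"
proof -
  have "(\<lambda>n. if n \<in> B then y n else 0) sums t \<longleftrightarrow>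
        ((\<lambda>n. if n \<in> B then y n else 0) has_sum t) UNIV"
  proof
    show "((\<lambda>n. if n \<in> B then y n else 0) has_sum t) UNIV"
      if "(\<lambda>n. if n \<in> B then y n else 0) sums t"
      using that by (rule sums_nonneg_imp_has_sum) (use pos less_imp_le in auto)
  qed (rule has_sum_imp_sums)
  also have "\<dots> \<longleftrightarrow> (y has_sum t) B"
    by (rule has_sum_cong_neutral) auto
  also have "\<dots> \<longleftrightarrow> subsum B = t"
    unfolding subsum_def using summable_on has_sum_infsum infsumI by blast
  finally show ?thesis .
qed

lemma reps_eq: "reps y t = {B. subsum B = t}"
  unfolding reps_def using sums_iff_subsum by auto

lemma achievement_set_eq: "achievement_set y = range subsum"
  unfolding achievement_set_def reps_eq by auto

lemma achievement_set_interval: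
  assumes "achievement_set y = {a..b}"
  shows "achievement_set y = {0..subsum UNIV}"
proof -
  have range: "subsum ` UNIV = {a..b}"
    using assms achievement_set_eq by simp
  have "0 \<in> {a..b}" "subsum UNIV \<in> {a..b}"
    unfolding range[symmetric] by (metis rangeI subsum_empty)+
  moreover have "a \<in> range subsum" "b \<in> range subsum"
    using \<open>0 \<in> {a..b}\<close> unfolding range by auto
  then have "0 \<le> a" "b \<le> subsum UNIV"
    using subsum_nonneg subsum_mono[of _ UNIV] by auto
  ultimately show ?thesis
    using assms by (metis antisym atLeastAtMost_iff)
qed

lemma tail_Suc: "tail n = y n + tail (Suc n)"
proof -
  have "{n..} = insert n {Suc n..}" by auto
  then show ?thesis
    unfolding tail_def using subsum_insert[of n "{Suc n..}"] by simp
qed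

lemma tail_pos: "0 < tail n"
  unfolding tail_def by (rule subsum_pos) auto

lemma tail_antimono: "m \<le> n \<Longrightarrow> tail n \<le> tail m"
  unfolding tail_def by (rule subsum_mono) auto

lemma tail_eq_suminf: "tail n = (\<Sum>k. y (k + n))"
proof -
  have "((\<lambda>k. y (k + n)) has_sum (\<Sum>k. y (k + n))) UNIV"
    using summable_ignore_initial_segment[OF summable] pos less_imp_le
    by (intro sums_nonneg_imp_has_sum) (auto simp: summable_sums)
  then have "(y has_sum (\<Sum>k. y (k + n))) {n..}"
    by (rule has_sum_reindex_bij_betw[THEN iffD1, rotated])
      (auto intro!: bij_betw_byWitness[where f'="\<lambda>m. m - n"])
  then show ?thesis
    unfolding tail_def subsum_def by (rule infsumI)
qed

lemma tail_small: "0 < e \<Longrightarrow> \<exists>P\<ge>p. tail P < e"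
proof -
  assume "0 < e"
  then obtain N where "\<forall>n\<ge>N. norm (\<Sum>k. y (k + n)) < e"
    using suminf_exist_split[OF _ summable] by blast
  then show ?thesis
    unfolding tail_eq_suminf by (intro exI[of _ "max p N"]) (auto dest: spec[of _ "max p N"])
qed

lemma partial_subsum_LIMSEQ: "(\<lambda>n. sum y (B \<inter> {..<n})) \<longlonglongrightarrow> subsum B"
proof -
  have "(\<lambda>n. if n \<in> B then y n else 0) sums subsum B"
    using sums_iff_subsum by blast
  moreover have "(\<Sum>k<n. if k \<in> B then y k else 0) = sum y (B \<inter> {..<n})" for n
    by (simp add: sum.If_cases Int_commute)
  ultimately show ?thesis
    by (simp add: sums_def)
qed

definition tail_reps :: "nat \<Rightarrow> real \<Rightarrow> nat set set" where
  "tail_reps p s = {B. B \<subseteq> {p..} \<and> subsum B = s}"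

lemma tail_reps_subset_reps: "tail_reps p s \<subseteq> reps y s"
  unfolding tail_reps_def reps_eq by auto

lemma tail_reps_zero: "tail_reps p 0 = {{}}"
proof -
  have "B = {}" if "subsum B = 0" for B
    using subsum_pos[of B] that by auto
  then show ?thesis
    unfolding tail_reps_def by auto
qed

lemma tail_reps_tail: "tail_reps p (tail p) = {{p..}}"
proof -
  have "B = {p..}" if "B \<subseteq> {p..}" "subsum B = subsum {p..}" for B
    using subsum_subset_eq_imp_eq that by blast
  then show ?thesis
    unfolding tail_reps_def tail_def by auto
qed

lemma reps_decompose:
  "reps y t = (\<Union>F\<in>Pow {..<n}. (\<union>) F ` tail_reps n (t - subsum F))"
proof (intro equalityI subsetI)
  fix A assume "A \<in> reps y t"
  define F B where "F = A \<inter> {..<n}" and "B = A \<inter> {n..}"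
  have "A = F \<union> B" "F \<inter> B = {}"
    unfolding F_def B_def by auto
  then have "subsum B = t - subsum F"
    using \<open>A \<in> reps y t\<close> subsum_Un_disjoint by (simp add: reps_eq)
  then have "B \<in> tail_reps n (t - subsum F)"
    unfolding tail_reps_def B_def by simp
  moreover have "F \<in> Pow {..<n}"
    unfolding F_def by simp
  ultimately show "A \<in> (\<Union>F\<in>Pow {..<n}. (\<union>) F ` tail_reps n (t - subsum F))"
    using \<open>A = F \<union> B\<close> by blast
next
  fix A assume "A \<in> (\<Union>F\<in>Pow {..<n}. (\<union>) F ` tail_reps n (t - subsum F))"
  then obtain F B where "F \<subseteq> {..<n}" "B \<subseteq> {n..}" "subsum B = t - subsum F" "A = F \<union> B"
    unfolding tail_reps_def by blast
  moreover from this have "F \<inter> B = {}"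
    by (auto simp: subset_eq) (meson not_le)
  ultimately show "A \<in> reps y t"
    by (simp add: reps_eq subsum_Un_disjoint)
qed

lemma card_reps_decompose:
  assumes finite_tail_reps: "\<And>s. finite (tail_reps n s)"
  shows "finite (reps y t)"
    and "card (reps y t) = (\<Sum>F\<in>Pow {..<n}. card (tail_reps n (t - subsum F)))"
proof -
  have split: "(F \<union> B) \<inter> {..<n} = F" "(F \<union> B) \<inter> {n..} = B"
    if "F \<in> Pow {..<n}" "B \<in> tail_reps n s" for F B s
    using that unfolding tail_reps_def by (auto simp: subset_eq)
  have inj: "inj_on ((\<union>) F) (tail_reps n s)" if "F \<in> Pow {..<n}" for F s
  proof (rule inj_onI)
    fix B B' assume "B \<in> tail_reps n s" "B' \<in> tail_reps n s" "F \<union> B = F \<union> B'"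
    then show "B = B'" using split(2)[OF that] by metis
  qed
  have disjoint: "(\<union>) F ` tail_reps n (t - subsum F) \<inter> (\<union>) F' ` tail_reps n (t - subsum F') = {}"
    if "F \<in> Pow {..<n}" "F' \<in> Pow {..<n}" "F \<noteq> F'" for F F'
  proof -
    have "A \<inter> {..<n} = G" if "A \<in> (\<union>) G ` tail_reps n (t - subsum G)" "G \<in> Pow {..<n}" for A G
      using that split(1) by blast
    then show ?thesis using that by blast
  qed
  show "finite (reps y t)"
    unfolding reps_decompose[of _ n] using finite_tail_reps by simp
  have "card (reps y t) = (\<Sum>F\<in>Pow {..<n}. card ((\<union>) F ` tail_reps n (t - subsum F)))"
    unfolding reps_decompose[of _ n]
    by (rule card_UN_disjoint) (use finite_tail_reps disjoint in auto)
  also have "\<dots> = (\<Sum>F\<in>Pow {..<n}. card (tail_reps n (t - subsum F)))"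
    by (intro sum.cong refl card_image inj)
  finally show "card (reps y t) = (\<Sum>F\<in>Pow {..<n}. card (tail_reps n (t - subsum F)))" .
qed

end

section \<open>Nonincreasing sequences with an interval as achievement set\<close>

locale sorted_interval_seq = pos_summable +
  assumes term_antimono: "m \<le> n \<Longrightarrow> y n \<le> y m"
    and achievement_set_eq_interval: "achievement_set y = {0..subsum UNIV}"
begin

lemma term_le_tail: "y n \<le> tail (Suc n)"
proof (rule ccontr)
  assume "\<not> y n \<le> tail (Suc n)"
  define t where "t = (y n + tail (Suc n)) / 2"
  have t: "tail (Suc n) < t" "t < y n"
    using \<open>\<not> y n \<le> tail (Suc n)\<close> unfolding t_def by auto
  have "y n \<le> subsum UNIV"
    using subsum_mono[of "{n}" UNIV] by (simp add: subsum_finite)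
  then have "t \<in> achievement_set y"
    using achievement_set_eq_interval t tail_pos[of "Suc n"] by auto
  then obtain B where B: "subsum B = t"
    using achievement_set_eq by auto
  show False
  proof (cases "B \<subseteq> {Suc n..}")
    case True
    then have "subsum B \<le> tail (Suc n)"
      unfolding tail_def by (rule subsum_mono)
    then show False
      using B t by simp
  next
    case False
    then obtain i where "i \<in> B" "i \<le> n"
      by (meson atLeast_iff not_less_eq_eq subsetI)
    then have "y n \<le> subsum B"
      using subsum_mono[of "{i}" B] term_antimono[of i n] by (simp add: subsum_finite)
    then show False
      using B t by simp
  qed
qed

primrec greedy :: "nat \<Rightarrow> real \<Rightarrow> nat \<Rightarrow> real" where
  "greedy p t 0 = 0"
| "greedy p t (Suc n) = greedy p t n + (if p \<le> n \<and> greedy p t n + y n \<le> t then y n else 0)"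

lemma greedy_eq_sum:
  "greedy p t n = sum y ({m. p \<le> m \<and> greedy p t m + y m \<le> t} \<inter> {..<n})"
proof (induction n)
  case (Suc n)
  have "{m. p \<le> m \<and> greedy p t m + y m \<le> t} \<inter> {..<Suc n} =
        (if p \<le> n \<and> greedy p t n + y n \<le> t then insert n else id)
          ({m. p \<le> m \<and> greedy p t m + y m \<le> t} \<inter> {..<n})"
    by (auto simp: lessThan_Suc)
  then show ?case
    using Suc by simp
qed simp

lemma greedy_invariant:
  assumes "0 \<le> t" "t \<le> tail p" "p \<le> n"
  shows "greedy p t n \<le> t \<and> t - greedy p t n \<le> tail n"
  using assms(3)
proof (induction n rule: dec_induct)
  case base
  have "greedy p t n = 0" if "n \<le> p" for n
    using that by (induction n) auto
  then show ?case
    using assms by simp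
next
  case (step n)
  show ?case
  proof (cases "greedy p t n + y n \<le> t")
    case True
    then show ?thesis
      using step tail_Suc[of n] by simp
  next
    case False
    then show ?thesis
      using step term_le_tail[of n] by simp
  qed
qed

lemma tail_reps_nonempty:
  assumes "0 \<le> t" "t \<le> tail p"
  shows "tail_reps p t \<noteq> {}"
proof -
  define B where "B = {m. p \<le> m \<and> greedy p t m + y m \<le> t}"
  have "greedy p t \<longlonglongrightarrow> t"
  proof (rule LIMSEQ_I)
    fix e :: real assume "0 < e"
    then obtain P where "p \<le> P" "tail P < e"
      using tail_small by blast
    have "norm (greedy p t n - t) < e" if "P \<le> n" for n
    proof -
      have "greedy p t n \<le> t" "t - greedy p t n \<le> tail n"
        using greedy_invariant[OF assms, of n] that \<open>p \<le> P\<close> by auto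
      then show ?thesis
        using tail_antimono[OF that] \<open>tail P < e\<close> by simp
    qed
    then show "\<exists>N. \<forall>n\<ge>N. norm (greedy p t n - t) < e"
      by blast
  qed
  moreover have "greedy p t = (\<lambda>n. sum y (B \<inter> {..<n}))"
    unfolding B_def by (rule ext, rule greedy_eq_sum)
  then have "greedy p t \<longlonglongrightarrow> subsum B"
    using partial_subsum_LIMSEQ by simp
  ultimately have "subsum B = t"
    using LIMSEQ_unique by blast
  then have "B \<in> tail_reps p t"
    unfolding tail_reps_def B_def by auto
  then show ?thesis
    by blast
qed

context
  assumes finite_reps: "\<And>t. finite (reps y t)"
begin

lemma finite_tail_reps: "finite (tail_reps p s)"
  using finite_reps tail_reps_subset_reps by (rule finite_subset[rotated])

lemma card_tail_reps_prefix_le: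
  assumes "F \<subseteq> {p..<P}" "p \<le> P"
  shows "card (tail_reps P (s - subsum F)) \<le> card (tail_reps p s)"
proof (rule card_inj_on_le[of "(\<union>) F"])
  have disjoint: "F \<inter> C = {}" if "C \<in> tail_reps P s'" for C s'
    using that assms unfolding tail_reps_def by (auto simp: subset_eq) (meson not_le)
  show "inj_on ((\<union>) F) (tail_reps P (s - subsum F))"
    using disjoint by (auto intro!: inj_onI)
  show "(\<union>) F ` tail_reps P (s - subsum F) \<subseteq> tail_reps p s"
    using disjoint assms by (auto simp: tail_reps_def subsum_Un_disjoint)
qed (rule finite_tail_reps)

lemma many_tail_reps_within:
  assumes many: "\<And>P. \<exists>a b. 0 \<le> a \<and> a < b \<and> b \<le> tail P \<and> (\<forall>s\<in>{a..b}. k \<le> card (tail_reps P s))"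
    and cd: "0 \<le> c" "c < d" "d \<le> tail p"
  shows "\<exists>a b. c \<le> a \<and> a < b \<and> b \<le> d \<and> (\<forall>s\<in>{a..b}. k \<le> card (tail_reps p s))"
proof -
  obtain B where B: "B \<subseteq> {p..}" "subsum B = (c + d) / 2"
    using tail_reps_nonempty[of "(c + d) / 2" p] cd unfolding tail_reps_def by auto
  obtain P where P: "p \<le> P" "tail P < (d - c) / 2"
    using tail_small[of "(d - c) / 2" p] cd by auto
  obtain a b where ab: "0 \<le> a" "a < b" "b \<le> tail P" "\<forall>s\<in>{a..b}. k \<le> card (tail_reps P s)"
    using many by blast
  \<comment> \<open>shift the interval found beyond P by the part before P of a representation of the midpoint\<close>
  define F where "F = B \<inter> {..<P}"
  have F: "F \<subseteq> {p..<P}"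
    using B unfolding F_def by auto
  have "B = F \<union> (B \<inter> {P..})" "F \<inter> (B \<inter> {P..}) = {}"
    unfolding F_def by auto
  then have "subsum B = subsum F + subsum (B \<inter> {P..})"
    by (metis subsum_Un_disjoint)
  moreover have "0 \<le> subsum (B \<inter> {P..})" "subsum (B \<inter> {P..}) \<le> tail P"
    unfolding tail_def by (auto intro: subsum_nonneg subsum_mono)
  ultimately have "c \<le> subsum F + a" "subsum F + b \<le> d"
    using B(2) P(2) ab by (auto simp: field_simps)
  moreover have "k \<le> card (tail_reps p s)" if "s \<in> {subsum F + a..subsum F + b}" for s
  proof -
    have "s - subsum F \<in> {a..b}"
      using that by auto
    then show ?thesis
      using ab(4) card_tail_reps_prefix_le[OF F P(1), of s] by fastforce
  qed
  ultimately show ?thesis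
    using ab(2) by (intro exI[of _ "subsum F + a"] exI[of _ "subsum F + b"]) auto
qed

lemma many_tail_reps:
  assumes strict: "\<And>p. \<exists>m\<ge>p. y m < tail (Suc m)"
  shows "\<exists>a b. 0 \<le> a \<and> a < b \<and> b \<le> tail p \<and> (\<forall>s\<in>{a..b}. k \<le> card (tail_reps p s))"
proof (induction k arbitrary: p)
  case 0
  show ?case
    using tail_pos[of p] by (intro exI[of _ 0] exI[of _ "tail p"]) auto
next
  case (Suc k)
  obtain m where m: "p \<le> m" "y m < tail (Suc m)"
    using strict by blast
  obtain a b where ab: "y m \<le> a" "a < b" "b \<le> tail (Suc m)"
      "\<forall>s\<in>{a..b}. k \<le> card (tail_reps (Suc m) s)"
    using many_tail_reps_within[OF Suc, of "y m" "tail (Suc m)" "Suc m"] m pos[of m] by auto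
  \<comment> \<open>besides the representations beyond m, each s gets one that uses m\<close>
  have "Suc k \<le> card (tail_reps p s)" if s: "s \<in> {a..b}" for s
  proof -
    obtain C where C: "C \<in> tail_reps (Suc m) (s - y m)"
      using tail_reps_nonempty[of "s - y m" "Suc m"] s ab pos[of m] by auto
    have "m \<notin> C"
      using C unfolding tail_reps_def by auto
    then have "insert m C \<in> tail_reps p s"
      using C m(1) subsum_insert[of m C] unfolding tail_reps_def by auto
    moreover have "tail_reps (Suc m) s \<subseteq> tail_reps p s" "insert m C \<notin> tail_reps (Suc m) s"
      using m(1) unfolding tail_reps_def by auto
    ultimately have "insert (insert m C) (tail_reps (Suc m) s) \<subseteq> tail_reps p s"
      by blast
    then have "Suc (card (tail_reps (Suc m) s)) \<le> card (tail_reps p s)"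
      using \<open>insert m C \<notin> tail_reps (Suc m) s\<close> finite_tail_reps
      by (metis card_insert_disjoint card_mono)
    then show ?thesis
      using ab(4) s by fastforce
  qed
  moreover have "0 \<le> a" "b \<le> tail p"
    using ab pos[of m] tail_antimono[of p "Suc m"] m(1) by auto
  ultimately show ?case
    using ab(2) by blast
qed

lemma eventually_term_eq_tail:
  assumes bounded: "\<And>t. card (reps y t) \<le> N"
  shows "\<exists>n0. \<forall>n\<ge>n0. y n = tail (Suc n)"
proof (rule ccontr)
  assume "\<not> (\<exists>n0. \<forall>n\<ge>n0. y n = tail (Suc n))"
  then have "\<exists>m\<ge>p. y m < tail (Suc m)" for p
    using term_le_tail order_le_neq_trans by blast
  then obtain a where "Suc N \<le> card (tail_reps 0 a)"
    using many_tail_reps[where k="Suc N" and p=0] by fastforce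
  moreover have "card (tail_reps 0 a) \<le> card (reps y a)"
    by (rule card_mono[OF finite_reps tail_reps_subset_reps])
  ultimately show False
    using bounded[of a] by linarith
qed

end

end

section \<open>Geometric tails\<close>

definition dyadic_multiples :: "real \<Rightarrow> real set" where
  "dyadic_multiples c = {c * of_int m / 2 ^ J | m J. True}"

lemma dyadic_multiplesI [intro]: "c * of_int m / 2 ^ J \<in> dyadic_multiples c"
  unfolding dyadic_multiples_def by blast

lemma dyadic_multiples_add_diff:
  assumes "a \<in> dyadic_multiples c" "b \<in> dyadic_multiples c"
  shows "a + b \<in> dyadic_multiples c" "a - b \<in> dyadic_multiples c"
proof -
  obtain m J m' J' where ab: "a = c * of_int m / 2 ^ J" "b = c * of_int m' / 2 ^ J'"
    using assms unfolding dyadic_multiples_def by blast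
  have "a + b = c * of_int (m * 2 ^ J' + m' * 2 ^ J) / 2 ^ (J + J')"
       "a - b = c * of_int (m * 2 ^ J' - m' * 2 ^ J) / 2 ^ (J + J')"
    unfolding ab by (simp_all add: field_simps power_add)
  then show "a + b \<in> dyadic_multiples c" "a - b \<in> dyadic_multiples c"
    by (metis dyadic_multiplesI)+
qed

lemma countable_dyadic_multiples: "countable (dyadic_multiples c)"
proof -
  have "dyadic_multiples c = (\<lambda>(m, J). c * of_int m / 2 ^ J) ` (UNIV :: (int \<times> nat) set)"
    unfolding dyadic_multiples_def by auto
  then show ?thesis
    by simp
qed

lemma dyadic_multiples_translate_dense:
  assumes "0 < c" "a < b"
  shows "\<exists>t. a < t \<and> t < b \<and> t - \<tau> \<in> dyadic_multiples c"
proof -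
  obtain J :: nat where "c / (b - a) < 2 ^ J"
    using real_arch_pow[of 2 "c / (b - a)"] by auto
  then have step: "0 < c / 2 ^ J" "c / 2 ^ J < b - a"
    using assms by (simp_all add: field_simps)
  define u where "u = c / 2 ^ J"
  define m where "m = \<lfloor>(a - \<tau>) / u\<rfloor> + 1"
  have "(a - \<tau>) / u < of_int m" "of_int m \<le> (a - \<tau>) / u + 1"
    unfolding m_def by linarith+
  then have "a - \<tau> < of_int m * u" "of_int m * u \<le> a - \<tau> + u"
    using step(1) unfolding u_def[symmetric] by (simp_all add: field_simps)
  moreover have "of_int m * u \<in> dyadic_multiples c"
    unfolding u_def by (metis dyadic_multiplesI mult.commute times_divide_eq_right)
  ultimately show ?thesis
    using step(2) unfolding u_def[symmetric] by (intro exI[of _ "\<tau> + of_int m * u"]) auto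
qed

definition bump :: "real set \<Rightarrow> real \<Rightarrow> real \<Rightarrow> nat" where
  "bump D L s = (if s \<in> D \<inter> {0<..<L} then 2 else if s \<in> {0..L} then 1 else 0)"

locale geometric_tail = sorted_interval_seq +
  fixes n0 :: nat
  assumes term_eq_tail: "n0 \<le> n \<Longrightarrow> y n = tail (Suc n)"
begin

lemma term_geometric: "y (n0 + j) = y n0 / 2 ^ j"
proof (induction j)
  case (Suc j)
  have "y (n0 + j) = 2 * y (n0 + Suc j)"
    using term_eq_tail[of "n0 + j"] term_eq_tail[of "Suc (n0 + j)"] tail_Suc[of "Suc (n0 + j)"]
    by simp
  then show ?case
    using Suc by simp
qed simp

lemma tail_start: "tail n0 = 2 * y n0"
  using term_eq_tail[of n0] tail_Suc[of n0] by simp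

lemma subsum_in_dyadic_multiples:
  "finite B \<Longrightarrow> B \<subseteq> {n0..} \<Longrightarrow> subsum B \<in> dyadic_multiples (y n0)"
proof (induction B rule: finite_induct)
  case empty
  then show ?case
    using dyadic_multiplesI[of "y n0" 0 0] by simp
next
  case (insert n B)
  have "y n \<in> dyadic_multiples (y n0)"
    using insert.prems term_geometric[of "n - n0"] dyadic_multiplesI[of "y n0" 1 "n - n0"] by simp
  then show ?case
    using insert subsum_insert dyadic_multiples_add_diff(1) by simp
qed

lemma dyadic_subsum_exists:
  "m < 2 ^ Suc J \<Longrightarrow> \<exists>B. B \<subseteq> {n0..n0 + J} \<and> subsum B = y n0 * real m / 2 ^ J"
proof (induction J arbitrary: m)
  case 0
  then have "m = 0 \<or> m = 1"
    by auto
  then show ?case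
  proof
    assume "m = 0"
    then show ?thesis
      by (intro exI[of _ "{}"]) simp
  next
    assume "m = 1"
    then show ?thesis
      by (intro exI[of _ "{n0}"]) (simp add: subsum_finite)
  qed
next
  case (Suc J)
  have "m div 2 < 2 ^ Suc J"
    using Suc.prems by simp
  then obtain B where B: "B \<subseteq> {n0..n0 + J}" "subsum B = y n0 * real (m div 2) / 2 ^ J"
    using Suc.IH by blast
  have "real m = real (2 * (m div 2) + m mod 2)"
    by (simp only: mult_div_mod_eq)
  then have m: "real m = 2 * real (m div 2) + real (m mod 2)"
    by (simp only: of_nat_add of_nat_mult of_nat_numeral)
  show ?case
  proof (cases "m mod 2 = 0")
    case True
    then show ?thesis
      using B m by (intro exI[of _ B]) (auto simp: field_simps)
  next
    case False
    have "n0 + Suc J \<notin> B"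
      using B by auto
    then have "subsum (insert (n0 + Suc J) B) = y n0 * real m / 2 ^ Suc J"
      using subsum_insert B(2) term_geometric[of "Suc J"] m False by (simp add: field_simps)
    then show ?thesis
      using B(1) by (intro exI[of _ "insert (n0 + Suc J) B"]) auto
  qed
qed

lemma tail_reps_first_difference:
  assumes "B \<in> tail_reps n0 s" "C \<in> tail_reps n0 s" "j \<in> B" "j \<notin> C"
    and "B \<inter> {..<j} = C \<inter> {..<j}"
  shows "B = (B \<inter> {..<j}) \<union> {j}" "C = (B \<inter> {..<j}) \<union> {Suc j..}"
proof -
  define P B' C' where "P = B \<inter> {..<j}" "B' = B \<inter> {Suc j..}" "C' = C \<inter> {Suc j..}"
  have "n0 \<le> j"
    using assms unfolding tail_reps_def by auto
  have B: "B = insert j (P \<union> B')" "j \<notin> P \<union> B'" "P \<inter> B' = {}"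
  proof (rule set_eqI)
    show "x \<in> B \<longleftrightarrow> x \<in> insert j (P \<union> B')" for x
      using assms(3) unfolding P_B'_C'_def by (cases x j rule: linorder_cases) auto
  qed (auto simp: P_B'_C'_def)
  have C: "C = P \<union> C'" "P \<inter> C' = {}"
  proof (rule set_eqI)
    show "x \<in> C \<longleftrightarrow> x \<in> P \<union> C'" for x
      using assms(4,5) unfolding P_B'_C'_def
      by (cases x j rule: linorder_cases) (auto simp: set_eq_iff)
  qed (auto simp: P_B'_C'_def)
  have "subsum B = y j + subsum P + subsum B'"
    using B subsum_insert subsum_Un_disjoint by simp
  moreover have "subsum C = subsum P + subsum C'"
    using C subsum_Un_disjoint by simp
  moreover have "subsum B = subsum C"
    using assms(1,2) unfolding tail_reps_def by auto
  moreover have "subsum C' \<le> tail (Suc j)"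
    unfolding tail_def P_B'_C'_def by (rule subsum_mono) auto
  ultimately have "subsum B' \<le> 0" "subsum C' = tail (Suc j)"
    using subsum_nonneg[of B'] term_eq_tail[OF \<open>n0 \<le> j\<close>] by linarith+
  then have "B' = {}" "C' = {Suc j..}"
    using subsum_pos[of B'] subsum_subset_eq_imp_eq[of C' "{Suc j..}"]
    unfolding tail_def P_B'_C'_def by force+
  then show "B = P \<union> {j}" "C = P \<union> {Suc j..}"
    using B C by auto
qed

lemma tail_reps_finite_neq:
  assumes "B \<in> tail_reps n0 s" "C \<in> tail_reps n0 s" "B \<noteq> C"
  shows "finite B \<noteq> finite C"
proof -
  have "\<exists>k. (k \<in> B) \<noteq> (k \<in> C)"
    using assms(3) by blast
  then obtain j where j: "(j \<in> B) \<noteq> (j \<in> C)" "\<forall>i<j. \<not> (i \<in> B) \<noteq> (i \<in> C)"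
    unfolding exists_least_iff[of "\<lambda>k. (k \<in> B) \<noteq> (k \<in> C)"] by blast
  then have eq: "B \<inter> {..<j} = C \<inter> {..<j}"
    by auto
  have fin: "finite (X \<inter> {..<j} \<union> {j})" and inf: "infinite (X \<union> {Suc j..})" for X :: "nat set"
    by (simp_all add: infinite_Ici)
  show ?thesis
  proof (cases "j \<in> B")
    case True
    then show ?thesis
      using tail_reps_first_difference[OF assms(1,2) True _ eq] j(1) fin[of B] inf by metis
  next
    case False
    then show ?thesis
      using tail_reps_first_difference[OF assms(2,1) _ False eq[symmetric]] j(1) fin[of C] inf
      by metis
  qed
qed

lemma card_tail_reps_le_2: "finite (tail_reps n0 s)" "card (tail_reps n0 s) \<le> 2"
proof -
  have "\<exists>B C. tail_reps n0 s \<subseteq> {B, C}"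
  proof (cases "\<exists>B C. B \<in> tail_reps n0 s \<and> C \<in> tail_reps n0 s \<and> B \<noteq> C")
    case True
    then obtain B C where BC: "B \<in> tail_reps n0 s" "C \<in> tail_reps n0 s" "B \<noteq> C"
      by blast
    \<comment> \<open>of three distinct representations, two would have to be both finite or both infinite\<close>
    have "X \<in> {B, C}" if "X \<in> tail_reps n0 s" for X
    proof (rule ccontr)
      assume "X \<notin> {B, C}"
      then have "X \<noteq> B" "X \<noteq> C"
        by auto
      then have "finite X \<noteq> finite B" "finite X \<noteq> finite C" "finite B \<noteq> finite C"
        using tail_reps_finite_neq[OF that BC(1)] tail_reps_finite_neq[OF that BC(2)]
          tail_reps_finite_neq[OF BC] by simp_all
      then show False
        by blast
    qed
    then show ?thesis
      by blast
  qed blast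
  then obtain B C where BC: "tail_reps n0 s \<subseteq> {B, C}"
    by blast
  then show "finite (tail_reps n0 s)"
    by (rule finite_subset) simp
  have "card {B, C} \<le> 2"
    by (simp add: card_insert_if)
  then show "card (tail_reps n0 s) \<le> 2"
    using card_mono[OF _ BC] by simp
qed

lemma tail_reps_subset_interval: "B \<in> tail_reps n0 s \<Longrightarrow> s \<in> {0..2 * y n0}"
  using subsum_nonneg[of B] subsum_mono[of B "{n0..}"] tail_start
  unfolding tail_reps_def tail_def by auto

lemma finite_tail_rep_exists:
  assumes "s \<in> dyadic_multiples (y n0) \<inter> {0<..<2 * y n0}"
  shows "\<exists>B. finite B \<and> B \<noteq> {} \<and> B \<in> tail_reps n0 s"
proof -
  obtain m :: int and J :: nat where s: "s = y n0 * (of_int m / 2 ^ J)"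
    using assms unfolding dyadic_multiples_def by auto
  have "0 < y n0 * (of_int m / 2 ^ J)" "y n0 * (of_int m / 2 ^ J) < y n0 * 2"
    using assms unfolding s by (simp_all add: mult.commute)
  then have "0 < of_int m / (2::real) ^ J" "of_int m / (2::real) ^ J < 2"
    using pos[of n0] zero_less_mult_pos mult_less_cancel_left_pos by blast+
  then have "0 < m" "(of_int m :: real) < of_int (2 ^ Suc J)"
    by (simp_all add: zero_less_divide_iff divide_less_eq)
  then have "0 < m" "m < 2 ^ Suc J"
    by (simp_all only: of_int_less_iff)
  then have "nat m < 2 ^ Suc J" "real (nat m) = of_int m"
    by (simp_all add: nat_less_iff)
  then obtain B where "B \<subseteq> {n0..n0 + J}" "subsum B = s"
    using dyadic_subsum_exists[of "nat m" J] unfolding s by auto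
  moreover have "B \<noteq> {}"
    using \<open>subsum B = s\<close> assms by auto
  ultimately show ?thesis
    unfolding tail_reps_def by (intro exI[of _ B]) (auto intro: finite_subset)
qed

lemma infinite_tail_rep_from_finite:
  assumes "B \<in> tail_reps n0 s" "finite B" "B \<noteq> {}"
  shows "(B - {Max B}) \<union> {Suc (Max B)..} \<in> tail_reps n0 s"
proof -
  have "Max B \<in> B"
    using assms(2,3) by simp
  then have "n0 \<le> Max B"
    using assms(1) unfolding tail_reps_def by auto
  have "(B - {Max B}) \<inter> {Suc (Max B)..} = {}"
    using Max_ge[OF assms(2)] by (auto simp: Suc_le_eq leD)
  then have "subsum ((B - {Max B}) \<union> {Suc (Max B)..}) = subsum (insert (Max B) (B - {Max B}))"
    using subsum_Un_disjoint subsum_insert[of "Max B" "B - {Max B}"] term_eq_tail[OF \<open>n0 \<le> Max B\<close>]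
    unfolding tail_def by simp
  then show ?thesis
    using assms(1) \<open>Max B \<in> B\<close> \<open>n0 \<le> Max B\<close> unfolding tail_reps_def
    by (auto simp: insert_absorb)
qed

lemma card_tail_reps_dyadic:
  assumes "s \<in> dyadic_multiples (y n0) \<inter> {0<..<2 * y n0}"
  shows "card (tail_reps n0 s) = 2"
proof -
  obtain B where B: "finite B" "B \<noteq> {}" "B \<in> tail_reps n0 s"
    using finite_tail_rep_exists[OF assms] by blast
  define C where "C = (B - {Max B}) \<union> {Suc (Max B)..}"
  have "infinite C"
    unfolding C_def by (simp add: infinite_Ici)
  then have "card {B, C} = 2"
    using B(1) by (metis card_2_iff)
  moreover have "{B, C} \<subseteq> tail_reps n0 s"
    using infinite_tail_rep_from_finite[OF B(3,1,2)] B(3) unfolding C_def by blast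
  ultimately have "2 \<le> card (tail_reps n0 s)"
    using card_mono[OF card_tail_reps_le_2(1)] by metis
  then show ?thesis
    using card_tail_reps_le_2(2)[of s] by simp
qed

lemma tail_reps_unique:
  assumes "s \<notin> dyadic_multiples (y n0) \<inter> {0<..<2 * y n0}"
    and "B \<in> tail_reps n0 s" "C \<in> tail_reps n0 s"
  shows "B = C"
proof (rule ccontr)
  assume "B \<noteq> C"
  then have "finite B \<noteq> finite C"
    using tail_reps_finite_neq[OF assms(2,3)] by simp
  then obtain X where X: "X \<in> {B, C}" "finite X"
    by blast
  then have "s = subsum X" "X \<subseteq> {n0..}"
    using assms(2,3) unfolding tail_reps_def by auto
  then have "s \<in> dyadic_multiples (y n0)"
    using subsum_in_dyadic_multiples[OF X(2)] by simp
  then have "s = 0 \<or> s = tail n0"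
    using assms(1) tail_reps_subset_interval[OF assms(2)] unfolding tail_start by auto
  then have "tail_reps n0 s = {{}} \<or> tail_reps n0 s = {{n0..}}"
    using tail_reps_zero tail_reps_tail by auto
  then show False
    using assms(2,3) \<open>B \<noteq> C\<close> by blast
qed

lemma card_tail_reps: "card (tail_reps n0 s) = bump (dyadic_multiples (y n0)) (2 * y n0) s"
proof (cases "s \<in> {0..2 * y n0}")
  case True
  then obtain B where "B \<in> tail_reps n0 s"
    using tail_reps_nonempty[of s n0] tail_start by auto
  then have "s \<notin> dyadic_multiples (y n0) \<inter> {0<..<2 * y n0} \<Longrightarrow> tail_reps n0 s = {B}"
    using tail_reps_unique by blast
  then show ?thesis
    using True card_tail_reps_dyadic unfolding bump_def by auto
next
  case False
  then have "tail_reps n0 s = {}"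
    using tail_reps_subset_interval by blast
  then show ?thesis
    using False unfolding bump_def by auto
qed

lemma card_reps_eq_sum_bump:
  "finite (reps y t)"
  "card (reps y t) = (\<Sum>F\<in>Pow {..<n0}. bump (dyadic_multiples (y n0)) (2 * y n0) (t - subsum F))"
  using card_reps_decompose[of n0 t] card_tail_reps_le_2(1) card_tail_reps by simp_all

end

section \<open>Sums of shifted bumps\<close>

text \<open>The count of representations in the abstract: the indices i stand for the subsets of
  an initial segment, \<sigma> i for their sums, and bump D L for the count of representations by the
  geometric tail.\<close>

locale bump_profile =
  fixes I :: "'i set" and \<sigma> :: "'i \<Rightarrow> real" and i0 :: 'i and D :: "real set" and L :: real
  assumes finite_I: "finite I"
    and i0: "i0 \<in> I" "\<sigma> i0 = 0"
    and shift_pos: "\<And>i. i \<in> I \<Longrightarrow> i \<noteq> i0 \<Longrightarrow> 0 < \<sigma> i"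
    and L: "0 < L" "L \<in> D"
    and D_diff: "\<And>a b. a \<in> D \<Longrightarrow> b \<in> D \<Longrightarrow> a - b \<in> D"
    and countable_D: "countable D"
    and D_translate_dense: "\<And>a b \<tau>. a < b \<Longrightarrow> \<exists>t. a < t \<and> t < b \<and> t - \<tau> \<in> D"
begin

definition profile :: "real \<Rightarrow> nat" where
  "profile t = (\<Sum>i\<in>I. bump D L (t - \<sigma> i))"

definition breaks :: "real set" where
  "breaks = \<sigma> ` I \<union> (\<lambda>i. \<sigma> i + L) ` I"

definition active :: "real \<Rightarrow> 'i set" where
  "active z = {i\<in>I. \<sigma> i \<le> z \<and> z < \<sigma> i + L}"

definition starts :: "real \<Rightarrow> 'i set" where
  "starts z = {i\<in>I. \<sigma> i = z}"

definition ends :: "real \<Rightarrow> 'i set" where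
  "ends z = {i\<in>I. \<sigma> i + L = z}"

lemma D_zero: "0 \<in> D"
  using D_diff[OF L(2) L(2)] by simp

lemma D_minus: "a \<in> D \<Longrightarrow> - a \<in> D"
  using D_diff[OF D_zero] by fastforce

lemma D_add: "a \<in> D \<Longrightarrow> b \<in> D \<Longrightarrow> a + b \<in> D"
  using D_diff[of a "- b"] D_minus by fastforce

lemma shift_nonneg: "i \<in> I \<Longrightarrow> 0 \<le> \<sigma> i"
  using shift_pos[of i] i0 by (cases "i = i0") auto

lemma finite_breaks: "finite breaks"
  unfolding breaks_def using finite_I by simp

lemma shift_in_breaks: "i \<in> I \<Longrightarrow> \<sigma> i \<in> breaks" "i \<in> I \<Longrightarrow> \<sigma> i + L \<in> breaks"
  unfolding breaks_def by blast+

lemma breaks_nonneg: "w \<in> breaks \<Longrightarrow> 0 \<le> w"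
  unfolding breaks_def using shift_nonneg L(1) by fastforce

lemma active_subset: "active z \<subseteq> I"
  unfolding active_def by blast

lemma finite_active: "finite (active z)"
  using finite_I active_subset by (rule finite_subset[rotated])

lemma active_zero: "active 0 = {i0}"
  unfolding active_def using i0 L(1) shift_pos by force

lemma card_filter_eq_sum: "card {i\<in>I. P i} = (\<Sum>i\<in>I. of_bool (P i))"
  using finite_I by (simp add: Int_def)

lemma sum_indicator_active:
  "(\<Sum>i\<in>I. of_bool (i \<in> active z \<and> P i)) = card {i\<in>active z. P i}"
proof -
  have "I \<inter> {i. i \<in> active z \<and> P i} = {i\<in>active z. P i}"
    using active_subset by blast
  then show ?thesis
    using finite_I by simp
qed

lemma bump_right_of_break:
  assumes "i \<in> I" "z < t" "\<And>w. w \<in> breaks \<Longrightarrow> z < w \<Longrightarrow> t < w" "t - \<tau> \<in> D"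
  shows "bump D L (t - \<sigma> i) = of_bool (i \<in> active z) + of_bool (i \<in> active z \<and> \<tau> - \<sigma> i \<in> D)"
proof (cases "i \<in> active z")
  case True
  then have "\<sigma> i \<le> z" "t < \<sigma> i + L"
    using assms(3)[OF shift_in_breaks(2)[OF assms(1)]] unfolding active_def by auto
  moreover have "t - \<sigma> i \<in> D \<longleftrightarrow> \<tau> - \<sigma> i \<in> D"
    using D_diff[OF _ assms(4), of "t - \<sigma> i"] D_add[OF assms(4), of "\<tau> - \<sigma> i"] by auto
  ultimately show ?thesis
    using True assms(2) unfolding bump_def by auto
next
  case False
  then have "z < \<sigma> i \<or> \<sigma> i + L \<le> z"
    using assms(1) unfolding active_def by auto
  then have "t < \<sigma> i \<or> \<sigma> i + L < t"
    using assms(2,3) shift_in_breaks(1)[OF assms(1)] by fastforce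
  then show ?thesis
    using False unfolding bump_def by auto
qed

lemma no_breaks_right_of: "\<exists>t>z. \<forall>w\<in>breaks. z < w \<longrightarrow> t < w"
proof -
  define W where "W = insert (z + 1) {w\<in>breaks. z < w}"
  have "finite W" "W \<noteq> {}" "\<forall>w\<in>W. z < w"
    unfolding W_def using finite_breaks by auto
  then have "z < Min W"
    by simp
  moreover have "Min W \<le> w" if "w \<in> breaks" "z < w" for w
    using \<open>finite W\<close> that unfolding W_def by simp
  ultimately show ?thesis
    by (intro exI[of _ "(z + Min W) / 2"]) fastforce
qed

lemma profile_right_of_break:
  "\<exists>t. profile t = card (active z) + card {i\<in>active z. \<tau> - \<sigma> i \<in> D}"
proof -
  obtain t' where "z < t'" "\<forall>w\<in>breaks. z < w \<longrightarrow> t' < w"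
    using no_breaks_right_of by blast
  moreover obtain t where "z < t" "t < t'" "t - \<tau> \<in> D"
    using D_translate_dense \<open>z < t'\<close> by blast
  ultimately have "bump D L (t - \<sigma> i) =
      of_bool (i \<in> active z) + of_bool (i \<in> active z \<and> \<tau> - \<sigma> i \<in> D)" if "i \<in> I" for i
    using bump_right_of_break[OF that \<open>z < t\<close>] by force
  then have "profile t = (\<Sum>i\<in>I. of_bool (i \<in> active z \<and> True))
      + (\<Sum>i\<in>I. of_bool (i \<in> active z \<and> \<tau> - \<sigma> i \<in> D))"
    unfolding profile_def by (simp add: sum.distrib)
  then show ?thesis
    unfolding sum_indicator_active by auto
qed

lemma profile_generic: "\<exists>t. profile t = card (active z)"
proof -
  have "countable (\<Union>i\<in>I. (+) (\<sigma> i) ` D)"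
    using finite_I countable_D by (intro countable_UN) (auto intro: countable_finite)
  then obtain \<tau> where "\<tau> \<notin> (\<Union>i\<in>I. (+) (\<sigma> i) ` D)"
    using uncountable_UNIV_real by (metis UNIV_eq_I)
  then have "{i\<in>active z. \<tau> - \<sigma> i \<in> D} = {}"
    using active_subset by force
  then show ?thesis
    using profile_right_of_break[of z \<tau>] by (metis add_0_right card.empty)
qed

lemma active_subset_active_break: "active z \<noteq> {} \<Longrightarrow> \<exists>w\<in>breaks. active z \<subseteq> active w"
proof -
  assume "active z \<noteq> {}"
  define W where "W = {w\<in>breaks. w \<le> z}"
  have "finite W" "W \<noteq> {}"
    using \<open>active z \<noteq> {}\<close> finite_breaks shift_in_breaks(1)
    unfolding W_def active_def by auto
  then have "Max W \<in> breaks" "Max W \<le> z"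
    using Max_in unfolding W_def by auto
  moreover have "active z \<subseteq> active (Max W)"
  proof
    fix i assume i: "i \<in> active z"
    then have "\<sigma> i \<le> Max W"
      using \<open>finite W\<close> shift_in_breaks(1) unfolding W_def active_def by auto
    then show "i \<in> active (Max W)"
      using i \<open>Max W \<le> z\<close> unfolding active_def by auto
  qed
  ultimately show ?thesis
    by blast
qed

lemma profile_le_two_actives: "\<exists>t'. profile t \<le> card (active t) + card (active t')"
proof -
  define A where "A = {i\<in>I. \<sigma> i < t \<and> t \<le> \<sigma> i + L}"
  have "profile t \<le> (\<Sum>i\<in>I. of_bool (\<sigma> i \<le> t \<and> t < \<sigma> i + L) + of_bool (\<sigma> i < t \<and> t \<le> \<sigma> i + L))"
    unfolding profile_def by (rule sum_mono) (use L(1) in \<open>auto simp: bump_def\<close>)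
  also have "\<dots> = card (active t) + card A"
    unfolding active_def A_def by (simp add: sum.distrib card_filter_eq_sum)
  finally have "profile t \<le> card (active t) + card A" .
  moreover have "A \<subseteq> active (Max (\<sigma> ` A))" if "A \<noteq> {}"
  proof
    fix i assume "i \<in> A"
    have "finite A"
      unfolding A_def using finite_I by simp
    have "Max (\<sigma> ` A) \<in> \<sigma> ` A"
      using Max_in \<open>finite A\<close> \<open>A \<noteq> {}\<close> by blast
    then obtain j where "j \<in> A" "\<sigma> j = Max (\<sigma> ` A)"
      by (metis imageE)
    moreover have "\<sigma> i \<le> Max (\<sigma> ` A)"
      using \<open>finite A\<close> \<open>i \<in> A\<close> by simp
    ultimately show "i \<in> active (Max (\<sigma> ` A))"
      using \<open>i \<in> A\<close> unfolding A_def active_def by auto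
  qed
  then have "card A \<le> card (active (Max (\<sigma> ` A)))"
    using card_mono[OF finite_active] by (cases "A = {}") auto
  ultimately show ?thesis
    by (meson add_left_mono order_trans)
qed

lemma heavy_break_exists: "5 \<le> profile t \<Longrightarrow> \<exists>z\<in>breaks. 3 \<le> card (active z)"
proof -
  assume "5 \<le> profile t"
  moreover obtain t' where "profile t \<le> card (active t) + card (active t')"
    using profile_le_two_actives by blast
  ultimately have "3 \<le> card (active t) \<or> 3 \<le> card (active t')"
    by linarith
  then obtain z where "3 \<le> card (active z)"
    by blast
  moreover from this have "active z \<noteq> {}"
    by auto
  then obtain w where "w \<in> breaks" "active z \<subseteq> active w"
    using active_subset_active_break by blast
  ultimately show ?thesis
    using card_mono[OF finite_active] by (meson order_trans)
qed

lemma profile_eq: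
  "profile z = card (active z) + card {i\<in>active z. \<sigma> i < z \<and> z - \<sigma> i \<in> D} + card (ends z)"
proof -
  have bump_eq: "bump D L (z - \<sigma> i) = of_bool (i \<in> active z \<and> True)
      + of_bool (i \<in> active z \<and> \<sigma> i < z \<and> z - \<sigma> i \<in> D) + of_bool (\<sigma> i + L = z)" if "i \<in> I" for i
    using that L unfolding bump_def active_def by auto
  have "profile z = (\<Sum>i\<in>I. of_bool (i \<in> active z \<and> True))
      + (\<Sum>i\<in>I. of_bool (i \<in> active z \<and> \<sigma> i < z \<and> z - \<sigma> i \<in> D))
      + (\<Sum>i\<in>I. of_bool (\<sigma> i + L = z))"
    unfolding profile_def sum.distrib[symmetric] by (intro sum.cong refl bump_eq)
  then show ?thesis
    unfolding sum_indicator_active card_filter_eq_sum[symmetric] ends_def by simp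
qed

lemma active_consecutive_breaks:
  assumes "zp < zs" "\<And>w. w \<in> breaks \<Longrightarrow> w < zs \<Longrightarrow> w \<le> zp"
  shows "active zp = (active zs - starts zs) \<union> ends zs"
proof (intro equalityI subsetI)
  fix i assume i: "i \<in> active zp"
  then have "i \<in> I" "\<sigma> i \<le> zp" "zp < \<sigma> i + L"
    unfolding active_def by auto
  then have "zs \<le> \<sigma> i + L"
    using assms(2)[OF shift_in_breaks(2)] by force
  then show "i \<in> (active zs - starts zs) \<union> ends zs"
    using \<open>i \<in> I\<close> \<open>\<sigma> i \<le> zp\<close> assms(1) unfolding active_def starts_def ends_def by auto
next
  fix i assume "i \<in> (active zs - starts zs) \<union> ends zs"
  then have "i \<in> I" "\<sigma> i < zs" "zs \<le> \<sigma> i + L"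
    using L(1) unfolding active_def starts_def ends_def by auto
  then show "i \<in> active zp"
    using assms shift_in_breaks(1) unfolding active_def by force
qed

lemma active_same_class:
  assumes "card (active z) = 3" "\<And>t. profile t \<noteq> 4" "j \<in> active z" "k \<in> active z"
  shows "\<sigma> j - \<sigma> k \<in> D"
proof -
  \<comment> \<open>a point of a class of size 1 would make the profile take the value 3 + 1\<close>
  have partner: "\<exists>i'\<in>active z. i' \<noteq> i \<and> \<sigma> i - \<sigma> i' \<in> D" if "i \<in> active z" for i
  proof (rule ccontr)
    assume "\<not> ?thesis"
    then have "{i'\<in>active z. \<sigma> i - \<sigma> i' \<in> D} = {i}"
      using that D_zero by auto
    then show False
      using profile_right_of_break[of z "\<sigma> i"] assms(1,2) by auto
  qed
  show ?thesis
  proof (rule ccontr)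
    assume jk: "\<sigma> j - \<sigma> k \<notin> D"
    obtain j' where j': "j' \<in> active z" "j' \<noteq> j" "\<sigma> j - \<sigma> j' \<in> D"
      using partner[OF assms(3)] by blast
    obtain k' where k': "k' \<in> active z" "k' \<noteq> k" "\<sigma> k - \<sigma> k' \<in> D"
      using partner[OF assms(4)] by blast
    have "j \<noteq> k"
      using jk D_zero by auto
    moreover have "j' \<noteq> k"
      using jk j'(3) by auto
    moreover have "k' \<noteq> j"
      using jk D_minus[OF k'(3)] by auto
    moreover have "j' \<noteq> k'"
      using jk D_diff[OF j'(3) k'(3)] by auto
    ultimately have "card {j, j', k, k'} = 4"
      using j'(2) k'(2) by (simp add: card_insert_if)
    moreover have "{j, j', k, k'} \<subseteq> active z"
      using assms(3,4) j' k' by auto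
    ultimately show False
      using card_mono[OF finite_active, of "{j, j', k, k'}" z] assms(1) by simp
  qed
qed

lemma preceding_break_exists:
  assumes "0 < z"
  shows "\<exists>w\<in>breaks. w < z \<and> (\<forall>w'\<in>breaks. w' < z \<longrightarrow> w' \<le> w)"
proof -
  define W where "W = {w\<in>breaks. w < z}"
  have "finite W" "0 \<in> W"
    unfolding W_def using finite_breaks shift_in_breaks(1)[OF i0(1)] i0(2) assms by auto
  then have "Max W \<in> W"
    by (intro Max_in) auto
  moreover have "\<forall>w'\<in>breaks. w' < z \<longrightarrow> w' \<le> Max W"
    using \<open>finite W\<close> unfolding W_def by simp
  ultimately show ?thesis
    unfolding W_def by blast
qed

context
  fixes S :: real
  assumes covered: "\<And>t. 0 \<le> t \<Longrightarrow> t \<le> S \<Longrightarrow> 1 \<le> profile t"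
    and shifts_le: "\<And>i. i \<in> I \<Longrightarrow> \<sigma> i + L \<le> S"
    and no_4: "\<And>t. profile t \<noteq> 4"
    and le_6: "\<And>t. profile t \<le> 6"
begin

lemma first_heavy_break:
  assumes "zp < zs" "\<And>w. w \<in> breaks \<Longrightarrow> w < zs \<Longrightarrow> w \<le> zp"
    and "card (active zp) \<le> 2" "3 \<le> card (active zs)"
  shows "card (active zs) = 3" "starts zs \<noteq> {}"
proof -
  \<comment> \<open>compare the generic value card (active zs) with the value just right of zs, which
    counts the bumps starting at zs twice\<close>
  have "finite (starts zs)"
    using finite_I unfolding starts_def by simp
  have "card (active zs) \<noteq> 4" "card (active zs) \<le> 6"
    using profile_generic[of zs] no_4 le_6 by metis+
  have "active zs \<subseteq> (active zs - starts zs) \<union> starts zs"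
    by blast
  then have "card (active zs) \<le> card (active zs - starts zs) + card (starts zs)"
    using card_mono[OF _ \<open>active zs \<subseteq> _\<close>] card_Un_le \<open>finite (starts zs)\<close> finite_active
    by (meson finite_Diff finite_UnI order_trans)
  moreover have "card (active zs - starts zs) \<le> card (active zp)"
    using active_consecutive_breaks[OF assms(1,2)] finite_active card_mono by (metis Un_upper1)
  moreover obtain t where "profile t = card (active zs) + card {i\<in>active zs. zs - \<sigma> i \<in> D}"
    using profile_right_of_break by blast
  moreover have "starts zs \<subseteq> {i\<in>active zs. zs - \<sigma> i \<in> D}"
    using D_zero L(1) unfolding starts_def active_def by auto
  then have "card (starts zs) \<le> card {i\<in>active zs. zs - \<sigma> i \<in> D}"
    using finite_active by (simp add: card_mono)
  ultimately have "card (active zs) \<le> 2 + card (starts zs)"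
    "card (active zs) + card (starts zs) \<le> 6"
    using assms(3) le_6[of t] by linarith+
  then show "card (active zs) = 3" "starts zs \<noteq> {}"
    using assms(4) \<open>card (active zs) \<noteq> 4\<close> by force+
qed

lemma first_heavy_break_one_class:
  assumes "card (active zs) = 3" "starts zs \<noteq> {}" "i \<in> active zs"
  shows "zs - \<sigma> i \<in> D"
proof -
  obtain e where "e \<in> starts zs"
    using assms(2) by blast
  then have "e \<in> active zs" "\<sigma> e = zs"
    using L(1) unfolding starts_def active_def by auto
  then show ?thesis
    using active_same_class[OF assms(1) no_4 _ assms(3)] by metis
qed

lemma active_nonempty_before_break:
  assumes "zp < zs" "\<And>w. w \<in> breaks \<Longrightarrow> w < zs \<Longrightarrow> w \<le> zp" "0 \<le> zp" "zs \<in> breaks"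
  shows "active zp \<noteq> {}"
proof -
  define t where "t = (zp + zs) / 2"
  have "zp < t" "t < zs"
    using assms(1) unfolding t_def by auto
  moreover have "zs \<le> S"
    using assms(4) shifts_le L(1) unfolding breaks_def by force
  ultimately have "1 \<le> profile t"
    using covered assms(3) by simp
  then have "(\<Sum>i\<in>I. bump D L (t - \<sigma> i)) \<noteq> 0"
    unfolding profile_def by simp
  then obtain i where "i \<in> I" "bump D L (t - \<sigma> i) \<noteq> 0"
    by (meson sum.neutral)
  then have "\<sigma> i \<le> t" "t \<le> \<sigma> i + L"
    unfolding bump_def by (auto split: if_splits)
  then have "\<sigma> i \<le> zp" "zp < \<sigma> i + L"
    using assms(2)[OF shift_in_breaks(1)[OF \<open>i \<in> I\<close>]] \<open>zp < t\<close> \<open>t < zs\<close> by auto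
  then have "i \<in> active zp"
    using \<open>i \<in> I\<close> unfolding active_def by simp
  then show ?thesis
    by blast
qed

lemma first_heavy_break_predecessor:
  assumes "zp < zs" "\<And>w. w \<in> breaks \<Longrightarrow> w < zs \<Longrightarrow> w \<le> zp" "0 \<le> zp" "zs \<in> breaks"
    and "card (active zp) \<le> 2" "card (active zs) = 3" "starts zs \<noteq> {}"
  shows "card (active zp) = 1"
proof -
  have active_zp: "active zp = (active zs - starts zs) \<union> ends zs"
    using active_consecutive_breaks[OF assms(1,2)] .
  \<comment> \<open>all of active zp lies in the class of zs, so the profile takes the value 2 card (active zp)\<close>
  have "{i\<in>active zp. zs - \<sigma> i \<in> D} = active zp"
    using first_heavy_break_one_class[OF assms(6,7)] L(2) unfolding active_zp ends_def by auto
  moreover obtain t where "profile t = card (active zp) + card {i\<in>active zp. zs - \<sigma> i \<in> D}"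
    using profile_right_of_break by blast
  ultimately have "card (active zp) \<noteq> 2"
    using no_4[of t] by auto
  moreover have "card (active zp) \<noteq> 0"
    using active_nonempty_before_break[OF assms(1-4)] finite_active by simp
  ultimately show ?thesis
    using assms(5) by linarith
qed

lemma no_heavy_break: "z \<in> breaks \<Longrightarrow> card (active z) < 3"
proof (rule ccontr)
  assume "z \<in> breaks" "\<not> card (active z) < 3"
  define heavy where "heavy = {w\<in>breaks. 3 \<le> card (active w)}"
  define zs where "zs = Min heavy"
  have "finite heavy" "heavy \<noteq> {}"
    using finite_breaks \<open>z \<in> breaks\<close> \<open>\<not> card (active z) < 3\<close> unfolding heavy_def by auto
  then have "zs \<in> breaks" "3 \<le> card (active zs)" and zs_min: "\<And>w. w \<in> heavy \<Longrightarrow> zs \<le> w"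
    unfolding zs_def using Min_in[of heavy] unfolding heavy_def by auto
  then have "zs \<noteq> 0"
    using active_zero by auto
  then have "0 < zs"
    using breaks_nonneg[OF \<open>zs \<in> breaks\<close>] by simp
  then obtain zp where "zp \<in> breaks" "zp < zs" "\<forall>w\<in>breaks. w < zs \<longrightarrow> w \<le> zp"
    using preceding_break_exists by blast
  then have "0 \<le> zp" and zp_max: "\<And>w. w \<in> breaks \<Longrightarrow> w < zs \<Longrightarrow> w \<le> zp"
    using breaks_nonneg by blast+
  have "card (active zp) \<le> 2"
    using zs_min[of zp] \<open>zp \<in> breaks\<close> \<open>zp < zs\<close> unfolding heavy_def by force
  then have zs3: "card (active zs) = 3" "starts zs \<noteq> {}" and "card (active zp) = 1"
    using first_heavy_break[OF \<open>zp < zs\<close> zp_max] first_heavy_break_predecessor[OF \<open>zp < zs\<close> zp_max]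
      \<open>3 \<le> card (active zs)\<close> \<open>0 \<le> zp\<close> \<open>zs \<in> breaks\<close> by auto
  \<comment> \<open>now the profile at zs itself is 3 + card (active zp)\<close>
  have "{i\<in>active zs. \<sigma> i < zs \<and> zs - \<sigma> i \<in> D} = active zs - starts zs"
    using first_heavy_break_one_class[OF zs3] unfolding active_def starts_def by auto
  moreover have "card (active zp) = card (active zs - starts zs) + card (ends zs)"
  proof -
    have "active zp = (active zs - starts zs) \<union> ends zs"
      using active_consecutive_breaks \<open>zp < zs\<close> zp_max by blast
    moreover have "(active zs - starts zs) \<inter> ends zs = {}"
      unfolding ends_def active_def by auto
    ultimately show ?thesis
      using finite_active finite_I by (simp add: card_Un_disjoint ends_def)
  qed
  ultimately have "profile zs = 4"
    using profile_eq[of zs] zs3(1) \<open>card (active zp) = 1\<close> by simp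
  then show False
    using no_4 by blast
qed

end

theorem profile_ge_7:
  assumes "\<And>t. 0 \<le> t \<Longrightarrow> t \<le> S \<Longrightarrow> 1 \<le> profile t" "\<And>i. i \<in> I \<Longrightarrow> \<sigma> i + L \<le> S"
    and "\<And>t. profile t \<noteq> 4" "5 \<le> profile t"
  shows "\<exists>t. 7 \<le> profile t"
proof (rule ccontr)
  assume "\<not> (\<exists>t. 7 \<le> profile t)"
  have "profile t' \<le> 6" for t'
  proof -
    have "\<not> 7 \<le> profile t'"
      using \<open>\<not> (\<exists>t. 7 \<le> profile t)\<close> by blast
    then show ?thesis
      by linarith
  qed
  then show False
    using heavy_break_exists[OF assms(4)] no_heavy_break[OF assms(1-3)] by fastforce
qed

end

section \<open>Reordering\<close>

lemma cardfun_eq_Fin_iff: "cardfun x t = Fin k \<longleftrightarrow> finite (reps x t) \<and> card (reps x t) = k"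
  unfolding cardfun_def by auto

lemma Fin_in_range_cardfun:
  "Fin k \<in> cardfun x ` achievement_set x \<longleftrightarrow> (\<exists>t. finite (reps x t) \<and> card (reps x t) = k \<and> 0 < k)"
proof
  assume "Fin k \<in> cardfun x ` achievement_set x"
  then obtain t where "t \<in> achievement_set x" "cardfun x t = Fin k"
    by (metis imageE)
  then have "reps x t \<noteq> {}" "finite (reps x t)" "card (reps x t) = k"
    unfolding cardfun_eq_Fin_iff achievement_set_def by auto
  moreover from this have "0 < k"
    using card_gt_0_iff[of "reps x t"] by simp
  ultimately show "\<exists>t. finite (reps x t) \<and> card (reps x t) = k \<and> 0 < k"
    by blast
next
  assume "\<exists>t. finite (reps x t) \<and> card (reps x t) = k \<and> 0 < k"
  then obtain t where "finite (reps x t)" "card (reps x t) = k" "0 < k"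
    by blast
  then have "t \<in> achievement_set x" "cardfun x t = Fin k"
    unfolding achievement_set_def cardfun_eq_Fin_iff by auto
  then show "Fin k \<in> cardfun x ` achievement_set x"
    by (metis imageI)
qed

lemma bounded_range_cardfun:
  assumes "bounded_cset (cardfun x ` achievement_set x)"
  obtains N where "\<And>t. finite (reps x t)" "\<And>t. card (reps x t) \<le> N"
proof -
  obtain N where N: "cardfun x ` achievement_set x \<subseteq> Fin ` {1..N}"
    using assms unfolding bounded_cset_def by blast
  have "finite (reps x t) \<and> card (reps x t) \<le> N" for t
  proof (cases "reps x t = {}")
    case False
    then have "cardfun x t \<in> Fin ` {1..N}"
      using N unfolding achievement_set_def by blast
    then show ?thesis
      using cardfun_eq_Fin_iff by fastforce
  qed simp
  then show ?thesis
    using that by blast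
qed

lemma pos_summable_reindex:
  assumes "pos_summable x" "bij \<sigma>"
  shows "pos_summable (x \<circ> \<sigma>)"
proof
  interpret pos_summable x by (rule assms(1))
  have "(x \<circ> \<sigma>) summable_on UNIV"
    using summable_on_reindex[of \<sigma> UNIV x] summable_on assms(2)
    by (simp add: bij_is_inj bij_is_surj)
  then show "summable (x \<circ> \<sigma>)"
    using summable_on_UNIV_nonneg_real_iff pos less_imp_le by (metis comp_apply)
qed (use pos_summable.pos[OF assms(1)] in simp)

lemma reps_reindex:
  assumes "pos_summable x" "bij \<sigma>"
  shows "bij_betw ((`) \<sigma>) (reps (x \<circ> \<sigma>) t) (reps x t)"
proof -
  interpret x: pos_summable x by (rule assms(1))
  interpret x\<sigma>: pos_summable "x \<circ> \<sigma>" by (rule pos_summable_reindex[OF assms])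
  have inj: "inj \<sigma>" and surj: "surj \<sigma>"
    using assms(2) by (auto simp: bij_def)
  have subsum_eq: "x\<sigma>.subsum C = x.subsum (\<sigma> ` C)" for C
    unfolding x\<sigma>.subsum_def x.subsum_def using infsum_reindex[of \<sigma> C x] inj
    by (simp add: inj_on_subset)
  show ?thesis
  proof (rule bij_betw_imageI)
    show "inj_on ((`) \<sigma>) (reps (x \<circ> \<sigma>) t)"
      using inj by (simp add: inj_on_def inj_image_eq_iff)
    have "B \<in> (`) \<sigma> ` {C. x.subsum (\<sigma> ` C) = t}" if "x.subsum B = t" for B
    proof -
      have "B = \<sigma> ` (\<sigma> -` B)"
        using surj by (simp add: surj_image_vimage_eq)
      then show ?thesis
        using that by (metis (mono_tags, lifting) imageI mem_Collect_eq)
    qed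
    then show "(`) \<sigma> ` reps (x \<circ> \<sigma>) t = reps x t"
      unfolding x\<sigma>.reps_eq x.reps_eq subsum_eq by auto
  qed
qed

lemma cardfun_reindex:
  assumes "pos_summable x" "bij \<sigma>"
  shows "cardfun (x \<circ> \<sigma>) = cardfun x" "achievement_set (x \<circ> \<sigma>) = achievement_set x"
proof -
  have "finite (reps (x \<circ> \<sigma>) t) = finite (reps x t)" "card (reps (x \<circ> \<sigma>) t) = card (reps x t)"
    "countable (reps (x \<circ> \<sigma>) t) = countable (reps x t)" "reps (x \<circ> \<sigma>) t = {} \<longleftrightarrow> reps x t = {}" for t
  proof -
    have bij: "bij_betw ((`) \<sigma>) (reps (x \<circ> \<sigma>) t) (reps x t)"
      by (rule reps_reindex[OF assms])
    then show "finite (reps (x \<circ> \<sigma>) t) = finite (reps x t)"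
      by (rule bij_betw_finite)
    show "card (reps (x \<circ> \<sigma>) t) = card (reps x t)"
      using bij by (rule bij_betw_same_card)
    show "countable (reps (x \<circ> \<sigma>) t) = countable (reps x t)"
      using bij countable_image countable_image_inj_on unfolding bij_betw_def by metis
    show "reps (x \<circ> \<sigma>) t = {} \<longleftrightarrow> reps x t = {}"
      using bij unfolding bij_betw_def by blast
  qed
  then show "cardfun (x \<circ> \<sigma>) = cardfun x" "achievement_set (x \<circ> \<sigma>) = achievement_set x"
    unfolding cardfun_def achievement_set_def by auto
qed

definition max_outside :: "(nat \<Rightarrow> real) \<Rightarrow> nat set \<Rightarrow> nat" where
  "max_outside x C = (SOME m. m \<notin> C \<and> (\<forall>k. k \<notin> C \<longrightarrow> x k \<le> x m))"

primrec decreasing_prefix :: "(nat \<Rightarrow> real) \<Rightarrow> nat \<Rightarrow> nat set" where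
  "decreasing_prefix x 0 = {}"
| "decreasing_prefix x (Suc n) =
    insert (max_outside x (decreasing_prefix x n)) (decreasing_prefix x n)"

definition decreasing_enum :: "(nat \<Rightarrow> real) \<Rightarrow> nat \<Rightarrow> nat" where
  "decreasing_enum x n = max_outside x (decreasing_prefix x n)"

lemma decreasing_prefix_eq: "decreasing_prefix x n = decreasing_enum x ` {..<n}"
  by (induction n) (simp_all add: decreasing_enum_def lessThan_Suc)

context
  fixes x :: "nat \<Rightarrow> real"
  assumes lim: "x \<longlonglongrightarrow> 0" and pos: "\<And>n. 0 < x n"
begin

lemma finite_level_set: "0 < e \<Longrightarrow> finite {k. e \<le> x k}"
proof -
  assume "0 < e"
  then obtain N where "\<forall>n\<ge>N. norm (x n) < e"
    using LIMSEQ_D[OF lim] by auto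
  then have "{k. e \<le> x k} \<subseteq> {..<N}"
    by (auto simp: not_less[symmetric])
  then show ?thesis
    by (rule finite_subset) simp
qed

lemma max_outside: "finite C \<Longrightarrow> max_outside x C \<notin> C \<and> (\<forall>k. k \<notin> C \<longrightarrow> x k \<le> x (max_outside x C))"
  unfolding max_outside_def
proof (rule someI_ex)
  assume "finite C"
  then obtain c where "c \<notin> C"
    using ex_new_if_finite[OF infinite_UNIV_nat] by blast
  define S where "S = {k. k \<notin> C \<and> x c \<le> x k}"
  have "S \<subseteq> {k. x c \<le> x k}"
    unfolding S_def by blast
  then have "finite S"
    using finite_level_set[OF pos[of c]] by (rule finite_subset)
  moreover have "c \<in> S"
    unfolding S_def using \<open>c \<notin> C\<close> by simp
  ultimately have "Max (x ` S) \<in> x ` S"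
    by (intro Max_in) auto
  then obtain m where m: "m \<in> S" "x m = Max (x ` S)"
    by (metis imageE)
  have max: "x k \<le> x m" if "k \<in> S" for k
    unfolding m(2) using \<open>finite S\<close> that by (intro Max_ge) auto
  have "x k \<le> x m" if "k \<notin> C" for k
  proof (cases "x c \<le> x k")
    case True
    then show ?thesis
      using that max unfolding S_def by blast
  next
    case False
    then show ?thesis
      using max[OF \<open>c \<in> S\<close>] by linarith
  qed
  then show "\<exists>m. m \<notin> C \<and> (\<forall>k. k \<notin> C \<longrightarrow> x k \<le> x m)"
    using m(1) unfolding S_def by blast
qed

lemma decreasing_enum_notin: "decreasing_enum x n \<notin> decreasing_enum x ` {..<n}"
  and decreasing_enum_max: "k \<notin> decreasing_enum x ` {..<n} \<Longrightarrow> x k \<le> x (decreasing_enum x n)"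
  using max_outside[of "decreasing_prefix x n"]
  unfolding decreasing_enum_def[of x n] decreasing_prefix_eq by simp_all

lemma decreasing_enum_antimono: "m \<le> n \<Longrightarrow> x (decreasing_enum x n) \<le> x (decreasing_enum x m)"
  using decreasing_enum_notin[of n] decreasing_enum_max[of "decreasing_enum x n" m]
  by (meson image_mono lessThan_subset_iff subsetD)

lemma inj_decreasing_enum: "inj (decreasing_enum x)"
proof (rule injI)
  fix m n assume eq: "decreasing_enum x m = decreasing_enum x n"
  show "m = n"
  proof (rule ccontr)
    assume "m \<noteq> n"
    then have "decreasing_enum x m \<in> decreasing_enum x ` {..<n} \<or>
        decreasing_enum x n \<in> decreasing_enum x ` {..<m}"
      by (cases m n rule: linorder_cases) auto
    then show False
      using decreasing_enum_notin[of m] decreasing_enum_notin[of n] eq by auto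
  qed
qed

lemma bij_decreasing_enum: "bij (decreasing_enum x)"
proof -
  have "k \<in> range (decreasing_enum x)" for k
  proof (rule ccontr)
    \<comment> \<open>an index never chosen would bound all chosen values from below\<close>
    assume "k \<notin> range (decreasing_enum x)"
    then have "range (decreasing_enum x) \<subseteq> {j. x k \<le> x j}"
      using decreasing_enum_max by blast
    then have "finite (range (decreasing_enum x))"
      using finite_level_set[OF pos[of k]] by (rule finite_subset)
    then show False
      using range_inj_infinite[OF inj_decreasing_enum] by blast
  qed
  then show ?thesis
    using inj_decreasing_enum by (auto simp: bij_def)
qed

end

lemma (in sorted_interval_seq) card_reps_ge_7:
  assumes "\<And>t. finite (reps y t)" "\<And>t. card (reps y t) \<le> N" "\<And>t. card (reps y t) \<noteq> 4"
    and "5 \<le> card (reps y t\<^sub>1)"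
  shows "\<exists>t. 7 \<le> card (reps y t)"
proof -
  obtain n0 where "\<forall>n\<ge>n0. y n = tail (Suc n)"
    using eventually_term_eq_tail[OF assms(1,2)] by blast
  then interpret geometric_tail y n0
    by unfold_locales auto
  interpret bump_profile "Pow {..<n0}" subsum "{}" "dyadic_multiples (y n0)" "2 * y n0"
    using pos[of n0] subsum_pos dyadic_multiples_add_diff(2) countable_dyadic_multiples
      dyadic_multiples_translate_dense dyadic_multiplesI[of "y n0" 2 0]
    by unfold_locales (auto simp: mult.commute)
  have card_eq: "card (reps y t) = profile t" for t
    unfolding profile_def by (rule card_reps_eq_sum_bump(2))
  have "1 \<le> profile t" if "0 \<le> t" "t \<le> subsum UNIV" for t
  proof -
    have "reps y t \<noteq> {}"
      using that achievement_set_eq_interval unfolding achievement_set_def by auto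
    then show ?thesis
      using assms(1)[of t] card_gt_0_iff[of "reps y t"] unfolding card_eq by simp
  qed
  moreover have "subsum F + 2 * y n0 \<le> subsum UNIV" if "F \<in> Pow {..<n0}" for F
  proof -
    have "F \<inter> {n0..} = {}"
      using that by auto
    then have "subsum F + 2 * y n0 = subsum (F \<union> {n0..})"
      using subsum_Un_disjoint tail_start unfolding tail_def by simp
    then show ?thesis
      using subsum_mono[of _ UNIV] by simp
  qed
  ultimately show ?thesis
    using profile_ge_7 assms(3,4) unfolding card_eq by blast
qed

lemma I1_imp_sorted_interval_seq:
  assumes "I1 M"
  obtains y where "sorted_interval_seq y" "M = cardfun y ` achievement_set y"
proof -
  obtain x a b where
    x: "pos_summable x" "achievement_set x = {a..b}" "M = cardfun x ` achievement_set x"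
    using assms unfolding I1_def pos_summable_def by blast
  define \<sigma> where "\<sigma> = decreasing_enum x"
  have lim: "x \<longlonglongrightarrow> 0"
    using summable_LIMSEQ_zero[OF pos_summable.summable[OF x(1)]] .
  have \<sigma>: "bij \<sigma>" "\<And>m n. m \<le> n \<Longrightarrow> x (\<sigma> n) \<le> x (\<sigma> m)"
    unfolding \<sigma>_def using bij_decreasing_enum[OF lim] decreasing_enum_antimono[OF lim]
      pos_summable.pos[OF x(1)] by auto
  interpret y: pos_summable "x \<circ> \<sigma>"
    by (rule pos_summable_reindex[OF x(1) \<sigma>(1)])
  have "sorted_interval_seq (x \<circ> \<sigma>)"
    using \<sigma>(2) y.achievement_set_interval cardfun_reindex[OF x(1) \<sigma>(1)] x(2)
    by unfold_locales auto
  moreover have "M = cardfun (x \<circ> \<sigma>) ` achievement_set (x \<circ> \<sigma>)"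
    using cardfun_reindex[OF x(1) \<sigma>(1)] x(3) by simp
  ultimately show ?thesis
    using that by blast
qed

theorem theorem7p7:
  fixes M :: "cval set"
  assumes "I1 M" and "bounded_cset M" and "Fin 4 \<notin> M"
    and "\<exists>k\<ge>5. Fin k \<in> M"
  shows "\<exists>k\<ge>7. Fin k \<in> M"
proof -
  obtain y where y: "sorted_interval_seq y" and M: "M = cardfun y ` achievement_set y"
    using I1_imp_sorted_interval_seq[OF assms(1)] by blast
  interpret sorted_interval_seq y
    by (rule y)
  obtain N where fin: "\<And>t. finite (reps y t)" and bound: "\<And>t. card (reps y t) \<le> N"
    using bounded_range_cardfun assms(2) unfolding M by blast
  have "card (reps y t) \<noteq> 4" for t
  proof
    assume "card (reps y t) = 4"
    then have "Fin 4 \<in> M"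
      unfolding M Fin_in_range_cardfun using fin by auto
    then show False
      using assms(3) by simp
  qed
  moreover obtain t\<^sub>1 where "5 \<le> card (reps y t\<^sub>1)"
  proof -
    obtain k where "5 \<le> k" "Fin k \<in> M"
      using assms(4) by blast
    then show ?thesis
      using that unfolding M Fin_in_range_cardfun by blast
  qed
  ultimately obtain t where "7 \<le> card (reps y t)"
    using card_reps_ge_7[OF fin bound] by blast
  then have "Fin (card (reps y t)) \<in> M"
    unfolding M Fin_in_range_cardfun using fin by auto
  then show ?thesis
    using \<open>7 \<le> card (reps y t)\<close> by blast
qed

end
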